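(* Let $\mathbb{X}=\mathbb{X}(p_1,p_2,p_3)$ be a weighted projective line with $\chi_{\mathbb{X}}<0$, and let $\mathcal{S}=\{\vec{x}\in\mathbb{L}\mid 0\leq\vec{x}\leq n\vec{\omega}+\vec{c}\text{ for all integers }n\geq 2\}$. If $a\vec{x}_i\in\mathcal{S}$ for some integer $a>0$ and some $1\leq i\leq 3$, then $(p_i-a+j)\vec{\omega}>0$ for every $1\leq j\leq a$.
   Context: $\mathbb{L}=\mathbb{L}(p_1,p_2,p_3)$ ($p_i\geq 2$) is the abelian group generated by $\vec{x}_1,\vec{x}_2,\vec{x}_3$ with $p_1\vec{x}_1=p_2\vec{x}_2=p_3\vec{x}_3=:\vec{c}$; $\vec{x}\geq\vec{y}$ means $\vec{x}-\vec{y}$ is a nonnegative integer combination of $\vec{x}_1,\vec{x}_2,\vec{x}_3$, and $\vec{x}>\vec{y}$ means $\vec{x}\geq\vec{y}$ and $\vec{x}\neq\vec{y}$. $\vec{\omega}=\vec{c}-\sum_i\vec{x}_i$ and $\chi_{\mathbb{X}}=2-\sum_{i=1}^3(1-1/p_i)$. *)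

theory Defs
  imports Complex_Main
begin

text \<open>The string group L(p1,p2,p3) is presented as Z^3 (coefficients of x1,x2,x3)
modulo the subgroup generated by p1 x1 - p2 x2 and p1 x1 - p3 x3.
An element of L is represented by an integer triple; equality in L is eqL.\<close>

type_synonym Lrep = "int \<times> int \<times> int"

definition Ladd :: "Lrep \<Rightarrow> Lrep \<Rightarrow> Lrep" where
  "Ladd u v = (fst u + fst v, fst (snd u) + fst (snd v), snd (snd u) + snd (snd v))"

definition Lsub :: "Lrep \<Rightarrow> Lrep \<Rightarrow> Lrep" where
  "Lsub u v = (fst u - fst v, fst (snd u) - fst (snd v), snd (snd u) - snd (snd v))"

definition Lscale :: "int \<Rightarrow> Lrep \<Rightarrow> Lrep" where
  "Lscale k u = (k * fst u, k * fst (snd u), k * snd (snd u))"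

definition Lzero :: Lrep where "Lzero = (0, 0, 0)"

definition Lgen :: "nat \<Rightarrow> Lrep" where
  "Lgen i = (if i = 1 then (1,0,0) else if i = 2 then (0,1,0) else (0,0,1))"

definition pw :: "nat \<Rightarrow> nat \<Rightarrow> nat \<Rightarrow> nat \<Rightarrow> nat" where
  "pw p1 p2 p3 i = (if i = 1 then p1 else if i = 2 then p2 else p3)"

definition eqL :: "nat \<Rightarrow> nat \<Rightarrow> nat \<Rightarrow> Lrep \<Rightarrow> Lrep \<Rightarrow> bool" where
  "eqL p1 p2 p3 u v \<longleftrightarrow> (\<exists>k1 k2 :: int.
      Lsub u v = (k1 * int p1 + k2 * int p1, - k1 * int p2, - k2 * int p3))"

definition Lc :: "nat \<Rightarrow> nat \<Rightarrow> nat \<Rightarrow> Lrep" where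
  "Lc p1 p2 p3 = Lscale (int p1) (Lgen 1)"

definition Lomega :: "nat \<Rightarrow> nat \<Rightarrow> nat \<Rightarrow> Lrep" where
  "Lomega p1 p2 p3 = Lsub (Lsub (Lsub (Lc p1 p2 p3) (Lgen 1)) (Lgen 2)) (Lgen 3)"

definition geL :: "nat \<Rightarrow> nat \<Rightarrow> nat \<Rightarrow> Lrep \<Rightarrow> Lrep \<Rightarrow> bool" where
  "geL p1 p2 p3 x y \<longleftrightarrow> (\<exists>n1 n2 n3 :: nat.
      eqL p1 p2 p3 (Lsub x y) (int n1, int n2, int n3))"

definition gtL :: "nat \<Rightarrow> nat \<Rightarrow> nat \<Rightarrow> Lrep \<Rightarrow> Lrep \<Rightarrow> bool" where
  "gtL p1 p2 p3 x y \<longleftrightarrow> geL p1 p2 p3 x y \<and> \<not> eqL p1 p2 p3 x y"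

definition chiX :: "nat \<Rightarrow> nat \<Rightarrow> nat \<Rightarrow> real" where
  "chiX p1 p2 p3 = 2 - ((1 - 1 / real p1) + (1 - 1 / real p2) + (1 - 1 / real p3))"

definition inS :: "nat \<Rightarrow> nat \<Rightarrow> nat \<Rightarrow> Lrep \<Rightarrow> bool" where
  "inS p1 p2 p3 x \<longleftrightarrow> geL p1 p2 p3 x Lzero \<and>
     (\<forall>n :: int. n \<ge> 2 \<longrightarrow>
        geL p1 p2 p3 (Ladd (Lscale n (Lomega p1 p2 p3)) (Lc p1 p2 p3)) x)"

end

theory Submission
  imports Defs
begin

text \<open>Every element of L has a unique normal form l1 x1 + l2 x2 + l3 x3 + l c with
  0 \<le> li < pi, and it is \<ge> 0 iff l \<ge> 0; for a representative (d1, d2, d3) one has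
  l = \<lfloor>d1/p1\<rfloor> + \<lfloor>d2/p2\<rfloor> + \<lfloor>d3/p3\<rfloor>. So a xi \<le> n\<omega> + c becomes an inequality between
  floors. For n = 2 it gives a \<le> pi - 2, hence k = pi - a + j \<ge> 3; for n = k it gives
  k\<omega> \<ge> 0 whenever pi - a < k \<le> pi. Finally k\<omega> \<noteq> 0, since \<omega> has infinite order when
  \<chi> \<noteq> 0.\<close>

lemma int_le_div_iff_mult_le:
  fixes x q P :: int
  assumes "0 < P"
  shows "q \<le> x div P \<longleftrightarrow> q * P \<le> x"
proof -
  have "(x + (- q) * P) div P = x div P - q"
    using div_mult_self1[of P x "- q"] assms by simp
  then show ?thesis
    using pos_imp_zdiv_nonneg_iff[OF assms, of "x + (- q) * P"] by simp
qed

lemma neg_div_eq_minus_one: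
  fixes k P :: int
  assumes "0 < k" "k \<le> P"
  shows "(- k) div P = -1"
  using int_le_div_iff_mult_le[of P "-1" "- k"] div_neg_pos_less0[of "- k" P] assms
  by simp

definition Lc_coeff :: "nat \<Rightarrow> nat \<Rightarrow> nat \<Rightarrow> Lrep \<Rightarrow> int" where
  "Lc_coeff p1 p2 p3 u = fst u div int p1 + fst (snd u) div int p2 + snd (snd u) div int p3"

lemma eqL_iff:
  "eqL p1 p2 p3 u v \<longleftrightarrow> (\<exists>t1 t2 t3 :: int. t1 + t2 + t3 = 0 \<and>
     Lsub u v = (t1 * int p1, t2 * int p2, t3 * int p3))"
  unfolding eqL_def
proof safe
  fix k1 k2 :: int
  assume "Lsub u v = (k1 * int p1 + k2 * int p1, - k1 * int p2, - k2 * int p3)"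
  then have "(k1 + k2) + (- k1) + (- k2) = 0 \<and>
      Lsub u v = ((k1 + k2) * int p1, (- k1) * int p2, (- k2) * int p3)"
    by (simp add: algebra_simps)
  then show "\<exists>t1 t2 t3 :: int. t1 + t2 + t3 = 0 \<and>
      Lsub u v = (t1 * int p1, t2 * int p2, t3 * int p3)"
    by blast
next
  fix t1 t2 t3 :: int
  assume "t1 + t2 + t3 = 0" and L: "Lsub u v = (t1 * int p1, t2 * int p2, t3 * int p3)"
  then have "t1 = - t2 - t3"
    by simp
  with L have "Lsub u v = ((- t2) * int p1 + (- t3) * int p1, - (- t2) * int p2, - (- t3) * int p3)"
    by (simp add: algebra_simps)
  then show "\<exists>k1 k2. Lsub u v = (k1 * int p1 + k2 * int p1, - k1 * int p2, - k2 * int p3)"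
    by blast
qed

lemma Lc_coeff_eqL:
  assumes "0 < p1" "0 < p2" "0 < p3" "eqL p1 p2 p3 u v"
  shows "Lc_coeff p1 p2 p3 u = Lc_coeff p1 p2 p3 v"
proof -
  obtain t1 t2 t3 :: int where t: "t1 + t2 + t3 = 0"
    "Lsub u v = (t1 * int p1, t2 * int p2, t3 * int p3)"
    using assms(4) eqL_iff by blast
  obtain u1 u2 u3 v1 v2 v3 where "u = (u1, u2, u3)" "v = (v1, v2, v3)"
    by (cases u, cases v) auto
  with t(2) have "u1 = v1 + t1 * int p1" "u2 = v2 + t2 * int p2" "u3 = v3 + t3 * int p3"
    by (auto simp: Lsub_def)
  with \<open>u = _\<close> \<open>v = _\<close> t(1) assms(1-3) show ?thesis
    by (simp add: Lc_coeff_def)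
qed

lemma eqL_normal_form:
  assumes "0 < p1" "0 < p2" "0 < p3"
  shows "eqL p1 p2 p3 u
    (fst u mod int p1 + Lc_coeff p1 p2 p3 u * int p1, fst (snd u) mod int p2, snd (snd u) mod int p3)"
  unfolding eqL_def
  by (rule exI[of _ "- (fst (snd u) div int p2)"], rule exI[of _ "- (snd (snd u) div int p3)"])
    (simp add: Lsub_def Lc_coeff_def minus_mod_eq_mult_div algebra_simps)

lemma geL_iff_Lc_coeff_nonneg:
  assumes "0 < p1" "0 < p2" "0 < p3"
  shows "geL p1 p2 p3 x y \<longleftrightarrow> 0 \<le> Lc_coeff p1 p2 p3 (Lsub x y)"
proof
  assume "geL p1 p2 p3 x y"
  then obtain n1 n2 n3 :: nat where "eqL p1 p2 p3 (Lsub x y) (int n1, int n2, int n3)"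
    unfolding geL_def by blast
  then have "Lc_coeff p1 p2 p3 (Lsub x y) = Lc_coeff p1 p2 p3 (int n1, int n2, int n3)"
    using Lc_coeff_eqL assms by blast
  then show "0 \<le> Lc_coeff p1 p2 p3 (Lsub x y)"
    using assms by (simp add: Lc_coeff_def pos_imp_zdiv_nonneg_iff)
next
  assume l: "0 \<le> Lc_coeff p1 p2 p3 (Lsub x y)"
  obtain d1 d2 d3 where d: "Lsub x y = (d1, d2, d3)"
    by (cases "Lsub x y") auto
  let ?l = "Lc_coeff p1 p2 p3 (Lsub x y)"
  have "eqL p1 p2 p3 (Lsub x y)
      (int (nat (d1 mod int p1 + ?l * int p1)), int (nat (d2 mod int p2)), int (nat (d3 mod int p3)))"
    using eqL_normal_form[OF assms, of "Lsub x y"] l assms by (simp add: d)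
  then show "geL p1 p2 p3 x y"
    unfolding geL_def by blast
qed

lemma Lc_coeff_Ladd_Lscale_Lc:
  assumes "0 < p1"
  shows "Lc_coeff p1 p2 p3 (Ladd u (Lscale m (Lc p1 p2 p3))) = Lc_coeff p1 p2 p3 u + m"
proof -
  obtain u1 u2 u3 where "u = (u1, u2, u3)"
    by (cases u) auto
  moreover have "(u1 + m * int p1) div int p1 = m + u1 div int p1"
    using assms by (intro div_mult_self1) simp
  ultimately show ?thesis
    by (simp add: Lc_coeff_def Ladd_def Lscale_def Lc_def Lgen_def)
qed

lemma Lscale_Lomega:
  "Lscale k (Lomega p1 p2 p3) = Ladd (- k, - k, - k) (Lscale k (Lc p1 p2 p3))"
  by (simp add: Lscale_def Lomega_def Lsub_def Ladd_def Lc_def Lgen_def algebra_simps)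

lemma Lomega_Lc_minus_Lscale_Lgen:
  "Lsub (Ladd (Lscale n (Lomega p1 p2 p3)) (Lc p1 p2 p3)) (Lscale a (Lgen i)) =
    Ladd (Lsub (- n, - n, - n) (Lscale a (Lgen i))) (Lscale (n + 1) (Lc p1 p2 p3))"
  by (simp add: Lscale_def Lomega_def Lsub_def Ladd_def Lc_def Lgen_def algebra_simps)

lemma Lc_coeff_diag_minus_Lscale_Lgen:
  assumes "1 \<le> i" "i \<le> 3"
  shows "Lc_coeff p1 p2 p3 (Lsub (- n, - n, - n) (Lscale a (Lgen i))) =
    Lc_coeff p1 p2 p3 (- n, - n, - n) + (- n - a) div int (pw p1 p2 p3 i) - (- n) div int (pw p1 p2 p3 i)"
proof -
  have "i = 1 \<or> i = 2 \<or> i = 3"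
    using assms by auto
  then show ?thesis
    by (auto simp: Lc_coeff_def Lsub_def Lscale_def Lgen_def pw_def)
qed

lemma geL_Lscale_Lomega_iff:
  assumes "0 < p1" "0 < p2" "0 < p3"
  shows "geL p1 p2 p3 (Lscale k (Lomega p1 p2 p3)) Lzero \<longleftrightarrow>
    0 \<le> k + Lc_coeff p1 p2 p3 (- k, - k, - k)"
proof -
  have "Lsub (Lscale k (Lomega p1 p2 p3)) Lzero = Lscale k (Lomega p1 p2 p3)"
    by (simp add: Lsub_def Lzero_def)
  then show ?thesis
    using geL_iff_Lc_coeff_nonneg[OF assms] Lc_coeff_Ladd_Lscale_Lc[OF assms(1)]
    by (simp add: Lscale_Lomega add.commute)
qed

lemma inS_Lscale_LgenD:
  assumes "0 < p1" "0 < p2" "0 < p3" "1 \<le> i" "i \<le> 3"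
    and "inS p1 p2 p3 (Lscale a (Lgen i))" "2 \<le> n"
  shows "0 \<le> n + 1 + Lc_coeff p1 p2 p3 (- n, - n, - n)
    + (- n - a) div int (pw p1 p2 p3 i) - (- n) div int (pw p1 p2 p3 i)"
proof -
  have "geL p1 p2 p3 (Ladd (Lscale n (Lomega p1 p2 p3)) (Lc p1 p2 p3)) (Lscale a (Lgen i))"
    using assms(6,7) unfolding inS_def by blast
  then show ?thesis
    using geL_iff_Lc_coeff_nonneg[OF assms(1-3)] Lc_coeff_Ladd_Lscale_Lc[OF assms(1)]
      Lc_coeff_diag_minus_Lscale_Lgen[OF assms(4,5)]
    by (simp add: Lomega_Lc_minus_Lscale_Lgen algebra_simps)
qed

lemma inS_Lscale_Lgen_le:
  assumes "2 \<le> p1" "2 \<le> p2" "2 \<le> p3" "1 \<le> i" "i \<le> 3"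
    and "inS p1 p2 p3 (Lscale a (Lgen i))"
  shows "a + 2 \<le> int (pw p1 p2 p3 i)"
proof -
  let ?P = "int (pw p1 p2 p3 i)"
  have P: "2 \<le> ?P"
    using assms(1-3) by (simp add: pw_def)
  have "0 \<le> 3 + Lc_coeff p1 p2 p3 (- 2, - 2, - 2) + (- 2 - a) div ?P - (- 2) div ?P"
    using inS_Lscale_LgenD[of p1 p2 p3 i a 2] assms by simp
  moreover have "Lc_coeff p1 p2 p3 (- 2, - 2, - 2) = - 3"
    using assms(1-3) by (simp add: Lc_coeff_def neg_div_eq_minus_one)
  moreover have "(- 2) div ?P = - 1"
    using P by (simp add: neg_div_eq_minus_one)
  ultimately have "- 1 \<le> (- 2 - a) div ?P"
    by simp
  then show ?thesis
    using int_le_div_iff_mult_le[of ?P] P by simp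
qed

lemma inS_Lscale_Lgen_Lomega_nonneg:
  assumes "2 \<le> p1" "2 \<le> p2" "2 \<le> p3" "1 \<le> i" "i \<le> 3"
    and "inS p1 p2 p3 (Lscale a (Lgen i))"
    and "int (pw p1 p2 p3 i) - a < k" "k \<le> int (pw p1 p2 p3 i)"
  shows "geL p1 p2 p3 (Lscale k (Lomega p1 p2 p3)) Lzero"
proof -
  let ?P = "int (pw p1 p2 p3 i)"
  have "2 \<le> k"
    using inS_Lscale_Lgen_le[OF assms(1-6)] assms(7) by linarith
  then have "0 \<le> k + 1 + Lc_coeff p1 p2 p3 (- k, - k, - k) + (- k - a) div ?P - (- k) div ?P"
    using inS_Lscale_LgenD[of p1 p2 p3 i a k] assms(1-6) by simp
  moreover have "(- k) div ?P = - 1"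
    using \<open>2 \<le> k\<close> assms(8) by (simp add: neg_div_eq_minus_one)
  moreover have "(- k - a) div ?P < - 1"
    using int_le_div_iff_mult_le[of ?P "- 1" "- k - a"] \<open>2 \<le> k\<close> assms(7,8) by simp
  ultimately have "0 \<le> k + Lc_coeff p1 p2 p3 (- k, - k, - k)"
    by linarith
  then show ?thesis
    using geL_Lscale_Lomega_iff assms(1-3) by simp
qed

lemma Lomega_infinite_order:
  assumes "0 < p1" "0 < p2" "0 < p3" "chiX p1 p2 p3 \<noteq> 0"
    and "eqL p1 p2 p3 (Lscale k (Lomega p1 p2 p3)) Lzero"
  shows "k = 0"
proof -
  obtain t1 t2 t3 :: int where t: "t1 + t2 + t3 = 0"
    "Lsub (Lscale k (Lomega p1 p2 p3)) Lzero = (t1 * int p1, t2 * int p2, t3 * int p3)"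
    using assms(5) eqL_iff by blast
  then have "k = (k - t1) * int p1" "- k = t2 * int p2" "- k = t3 * int p3"
    by (auto simp: Lscale_def Lomega_def Lsub_def Lc_def Lgen_def Lzero_def algebra_simps)
  then have "real_of_int k = real_of_int (k - t1) * real p1"
    "- real_of_int k = real_of_int t2 * real p2" "- real_of_int k = real_of_int t3 * real p3"
    by (metis of_int_minus of_int_mult of_int_of_nat_eq)+
  then have "real_of_int k / real p1 = real_of_int (k - t1)"
    "real_of_int k / real p2 = - real_of_int t2" "real_of_int k / real p3 = - real_of_int t3"
    using assms(1-3) by (simp_all add: field_simps)
  then have "real_of_int k * chiX p1 p2 p3 = - real_of_int (t1 + t2 + t3)"
    by (simp add: chiX_def algebra_simps)
  with t(1) assms(4) show "k = 0"
    by simp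
qed

theorem lemma5p2:
  fixes p1 p2 p3 :: nat and a :: int and i :: nat
  assumes "p1 \<ge> 2" and "p2 \<ge> 2" and "p3 \<ge> 2"
    and "chiX p1 p2 p3 < 0"
    and "a > 0"
    and "1 \<le> i" and "i \<le> 3"
    and "inS p1 p2 p3 (Lscale a (Lgen i))"
  shows "\<forall>j :: int. 1 \<le> j \<and> j \<le> a \<longrightarrow>
           gtL p1 p2 p3 (Lscale (int (pw p1 p2 p3 i) - a + j) (Lomega p1 p2 p3)) Lzero"
proof (intro allI impI)
  fix j :: int
  assume j: "1 \<le> j \<and> j \<le> a"
  let ?k = "int (pw p1 p2 p3 i) - a + j"
  have "geL p1 p2 p3 (Lscale ?k (Lomega p1 p2 p3)) Lzero"
    using inS_Lscale_Lgen_Lomega_nonneg[OF assms(1-3,6-8)] j by simp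
  moreover have "?k \<noteq> 0"
    using inS_Lscale_Lgen_le[OF assms(1-3,6-8)] j by linarith
  then have "\<not> eqL p1 p2 p3 (Lscale ?k (Lomega p1 p2 p3)) Lzero"
    using Lomega_infinite_order[of p1 p2 p3 ?k] assms(1-4) by force
  ultimately show "gtL p1 p2 p3 (Lscale ?k (Lomega p1 p2 p3)) Lzero"
    by (simp add: gtL_def)
qed

end
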